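(* There is $r_0>0$ such that (1) $\Phi_S(\mathsf x)$ is uniformly bounded on $\{\mathsf x\in\mathbb{Q}_S:\mathrm d(\mathsf x)\le r_0\}$; and (2) for almost every $\mathsf x\in\mathbb{Q}_S$ with $\mathrm d(\mathsf x)>r_0$, $$\Phi_S(\mathsf x)=\frac1{L_S\zeta_S(2)}+O_{L_S}\big(\mathrm d(\mathsf x)^{-1}\log\mathrm d(\mathsf x)\big).$$
   Context: $S=\{\infty,p_1,\dots,p_s\}$ with distinct primes, $S_f=S\setminus\{\infty\}$, $\mathbb{Q}_S=\prod_{p\in S}\mathbb{Q}_p$ with Haar (product) measure, $\mathbb{N}_S=\{m\in\mathbb{N}:\gcd(m,p_1\cdots p_s)=1\}$, $\zeta_S(2)=\sum_{m\in\mathbb{N}_S}m^{-2}$, $L_p=p$ ($p$ odd), $L_2=8$, $L_S=\prod_{p\in S_f}L_p$, $\mathrm d(\mathsf x)=\prod_{p\in S}|x_p|_p$. For $\mathsf x\in\prod_{p\in S}(\mathbb{Q}_p\setminus\{0\})$, $\Phi_S(\mathsf x)=\mathrm d(\mathsf x)\sum_{m\in\mathbb{N}_{\mathsf x}}\varphi(m)/m^3$ ($\varphi$ Euler's totient), where $\mathbb{N}_{\mathsf x}=\{m\in\mathbb{N}_S:m\ge\mathrm d(\mathsf x),\ m\equiv\mathrm{sign}(x_\infty)\,x_p\prod_{p'\in S_f}|x_{p'}|_{p'}\bmod L_p\mathbb{Z}_p\ \text{for each }p\in S_f\}$; $\Phi_S(\mathsf x)=0$ if some component of $\mathsf x$ is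 $0$. *)

theory Defs
  imports "HOL-Probability.Probability" "HOL-Number_Theory.Number_Theory"
begin

text \<open>An element of Q_p is represented by its p-adic digit expansion
  x = sum over n in Z of a(n) p^n, with digits a(n) in {0..p-1} and a(n) = 0 for all
  sufficiently negative n. This representation is unique.\<close>

type_synonym padic = "int \<Rightarrow> nat"

definition qp_space :: "nat \<Rightarrow> padic set" where
  "qp_space p = {a. (\<forall>n. a n < p) \<and> (\<exists>N. \<forall>n<N. a n = 0)}"

definition padic_zero :: padic where
  "padic_zero = (\<lambda>_. 0)"

definition padic_val :: "padic \<Rightarrow> int" where
  "padic_val a = (LEAST n. a n \<noteq> 0)"

definition padic_abs :: "nat \<Rightarrow> padic \<Rightarrow> rat" where
  "padic_abs p a = (if a = padic_zero then 0 else (of_nat p) powi (- padic_val a))"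

definition padic_trunc :: "nat \<Rightarrow> int \<Rightarrow> padic \<Rightarrow> rat" where
  "padic_trunc p N a = (\<Sum>n\<in>{n. n < N \<and> a n \<noteq> 0}. of_nat (a n) * (of_nat p) powi n)"

definition in_LZp :: "nat \<Rightarrow> nat \<Rightarrow> rat \<Rightarrow> bool" where
  "in_LZp p L r \<longleftrightarrow> (\<exists>u v::int. v \<noteq> 0 \<and> \<not> int p dvd v \<and> int L dvd u \<and> r = of_int u / of_int v)"

text \<open>padic_cong p L x c m:  m is congruent to c * x modulo L Z_p  (x in Q_p, c rational,
  m integer, L a power of p), i.e. c*x - m in L Z_p.  Since x - trunc_N(x) is in p^N Z_p,
  this holds iff c * trunc_N(x) - m lies in L Z_p for all sufficiently large N.\<close>

definition padic_cong :: "nat \<Rightarrow> nat \<Rightarrow> padic \<Rightarrow> rat \<Rightarrow> int \<Rightarrow> bool" where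
  "padic_cong p L x c m \<longleftrightarrow>
     (\<forall>\<^sub>F N in sequentially. in_LZp p L (c * padic_trunc p (int N) x - of_int m))"

text \<open>Digit sequences with i.i.d. uniform digits: the (normalised) Haar measure on Z_p.\<close>

definition digit_measure :: "nat \<Rightarrow> (nat \<Rightarrow> nat) measure" where
  "digit_measure p = PiM UNIV (\<lambda>_. uniform_count_measure {..<p})"

definition padic_shift :: "int \<Rightarrow> (nat \<Rightarrow> nat) \<Rightarrow> padic" where
  "padic_shift j b = (\<lambda>n. if j \<le> n then b (nat (n - j)) else 0)"

definition qp_measurable_space :: "nat \<Rightarrow> padic measure" where
  "qp_measurable_space p = restrict_space (PiM UNIV (\<lambda>_::int. count_space UNIV)) (qp_space p)"

text \<open>Haar measure on Q_p normalised by mu(Z_p) = 1: the set p^j Z_p^* (units shifted by j,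
  first digit nonzero) carries mass p^(-j) times the digit measure; {0} is null.\<close>

definition padic_measure :: "nat \<Rightarrow> padic measure" where
  "padic_measure p =
     distr (density (count_space UNIV \<Otimes>\<^sub>M digit_measure p)
              (\<lambda>(j, b). ennreal (real p powr (- real_of_int j)) * indicator {b. b 0 \<noteq> 0} b))
           (qp_measurable_space p) (\<lambda>(j, b). padic_shift j b)"

text \<open>Q_S = R x prod_{p in S_f} Q_p; an element is (x_inf, x) with x p the p-component.\<close>

type_synonym QS = "real \<times> (nat \<Rightarrow> padic)"

definition QS_measure :: "nat set \<Rightarrow> QS measure" where
  "QS_measure Sf = lborel \<Otimes>\<^sub>M PiM Sf padic_measure"

definition dS :: "nat set \<Rightarrow> QS \<Rightarrow> real" where
  "dS Sf x = \<bar>fst x\<bar> * (\<Prod>p\<in>Sf. real_of_rat (padic_abs p (snd x p)))"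

definition Lp :: "nat \<Rightarrow> nat" where
  "Lp p = (if p = 2 then 8 else p)"

definition LS :: "nat set \<Rightarrow> nat" where
  "LS Sf = (\<Prod>p\<in>Sf. Lp p)"

definition NS :: "nat set \<Rightarrow> nat set" where
  "NS Sf = {m. 1 \<le> m \<and> coprime m (\<Prod>Sf)}"

definition zetaS2 :: "nat set \<Rightarrow> real" where
  "zetaS2 Sf = (\<Sum>m. if m \<in> NS Sf then 1 / (real m)^2 else 0)"

definition Nx :: "nat set \<Rightarrow> QS \<Rightarrow> nat set" where
  "Nx Sf x = {m \<in> NS Sf. dS Sf x \<le> real m \<and>
      (\<forall>p\<in>Sf. padic_cong p (Lp p) (snd x p)
                 ((if fst x < 0 then -1 else 1) * (\<Prod>q\<in>Sf. padic_abs q (snd x q))) (int m))}"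

definition PhiS :: "nat set \<Rightarrow> QS \<Rightarrow> real" where
  "PhiS Sf x = (if fst x = 0 \<or> (\<exists>p\<in>Sf. snd x p = padic_zero) then 0
     else dS Sf x * (\<Sum>m. if m \<in> Nx Sf x then real (totient m) / (real m)^3 else 0))"

end

theory Submission
  imports Defs
begin

text \<open>
  For \<open>x\<close> with nonzero components, the \<open>p\<close>-adic conditions defining \<open>N_x\<close> say \<open>m \<equiv> b mod L_S\<close>
  for a single unit \<open>b\<close>: each \<open>|x_p|_p x_p\<close> is a \<open>p\<close>-adic unit, and the classes modulo the
  \<open>L_p\<close> are glued by the Chinese remainder theorem. Write \<open>Y = d(x)\<close>. Expanding
  \<open>\<phi>(m)/m = \<Sum>_{e|m} \<mu>(e)/e\<close> and putting \<open>m = e k\<close> turns \<open>\<Sum>_{m \<ge> Y, m \<equiv> b} \<phi>(m)/m^3\<close>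
  into \<open>\<Sum>_e \<mu>(e)/e^3 \<Sum>_{k \<ge> Y/e, e k \<equiv> b} 1/k^2\<close>. The inner sum runs over a residue class,
  is empty unless \<open>e\<close> is prime to \<open>L_S\<close>, and otherwise equals \<open>e/(L_S Y)\<close> up to
  \<open>O(min((e/Y)^2, e/Y))\<close>. As \<open>\<Sum>_{(e,L_S)=1} \<mu>(e)/e^2 = 1/\<zeta>_S(2)\<close>, the main terms give
  \<open>1/(L_S \<zeta>_S(2) Y)\<close> and the errors sum to \<open>O(log Y / Y^2)\<close>, so the estimate holds for every
  \<open>x\<close> with \<open>d(x) \<ge> 3\<close>. For \<open>d(x) \<le> 3\<close>, simply \<open>0 \<le> \<Phi>_S(x) \<le> 3 \<zeta>(2)\<close>.
\<close>

section \<open>The Moebius function\<close>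

text \<open>\<open>e\<close> is squarefree iff it is the product of its prime factors; this also gives \<open>moebius 0 = 0\<close>.\<close>

definition moebius :: "nat \<Rightarrow> real" where
  "moebius e = (if e = \<Prod>(prime_factors e) then (-1) ^ card (prime_factors e) else 0)"

lemma abs_moebius_le: "\<bar>moebius e\<bar> \<le> 1"
  by (simp add: moebius_def)

lemma prime_factors_Prod_primes:
  assumes "finite T" "\<forall>p\<in>T. prime p"
  shows "prime_factors (\<Prod>T) = T"
proof -
  have "0 \<notin> T"
    using assms(2) by auto
  then have "prime_factors (\<Prod>T) = \<Union>((prime_factors \<circ> (\<lambda>x. x)) ` T)"
    using prime_factors_prod[OF assms(1), of "\<lambda>x. x"] by simp
  also have "\<dots> = T"
    using assms by (auto simp: prime_prime_factors)
  finally show ?thesis .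
qed

lemma Prod_subset_prime_factors_dvd:
  fixes n :: nat
  assumes "n > 0" "T \<subseteq> prime_factors n"
  shows "\<Prod>T dvd n"
proof -
  have "\<Prod>T dvd \<Prod>(prime_factors n)"
    using assms by (intro prod_dvd_prod_subset) auto
  also have "\<dots> dvd (\<Prod>p\<in>prime_factors n. p ^ multiplicity p n)"
    by (intro prod_dvd_prod) (auto simp: prime_factors_multiplicity dvd_power)
  also have "\<dots> = n"
    using prime_factorization_nat[OF assms(1)] by simp
  finally show ?thesis .
qed

text \<open>The squarefree divisors of \<open>n\<close> are exactly the products of subsets of its prime factors.\<close>

lemma sum_divisors_moebius_multiplicative:
  fixes n :: nat and g :: "nat \<Rightarrow> real"
  assumes n: "n > 0"
    and g: "\<And>T. finite T \<Longrightarrow> \<forall>p\<in>T. prime p \<Longrightarrow> g (\<Prod>T) = (\<Prod>p\<in>T. g p)"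
  shows "(\<Sum>e | e dvd n. moebius e * g e) = (\<Prod>p\<in>prime_factors n. 1 - g p)"
proof -
  let ?SQ = "{e. e dvd n \<and> e = \<Prod>(prime_factors e)}"
  have "(\<Sum>e | e dvd n. moebius e * g e) = (\<Sum>e\<in>?SQ. moebius e * g e)"
    using n by (intro sum.mono_neutral_right) (auto simp: moebius_def)
  also have "\<dots> = (\<Sum>T\<in>Pow (prime_factors n). (-1) ^ card T * g (\<Prod>T))"
  proof (rule sum.reindex_bij_witness[where i = "\<lambda>T. \<Prod>T" and j = prime_factors])
    fix T assume T: "T \<in> Pow (prime_factors n)"
    then have T_primes: "finite T" "\<forall>p\<in>T. prime p"
      using finite_subset[of T "prime_factors n"] by auto
    show "prime_factors (\<Prod>T) = T"
      by (rule prime_factors_Prod_primes[OF T_primes])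
    show "\<Prod>T \<in> ?SQ"
      using Prod_subset_prime_factors_dvd[OF n] T prime_factors_Prod_primes[OF T_primes] by auto
  next
    fix e assume e: "e \<in> ?SQ"
    then have "e \<noteq> 0"
      using n by auto
    with e n show "prime_factors e \<in> Pow (prime_factors n)"
      by (auto intro: dvd_prime_factors[THEN subsetD])
    show "\<Prod>(prime_factors e) = e"
      using e by auto
    show "(-1) ^ card (prime_factors e) * g (\<Prod>(prime_factors e)) = moebius e * g e"
      using e by (simp add: moebius_def)
  qed
  also have "\<dots> = (\<Sum>T\<in>Pow (prime_factors n). (\<Prod>p\<in>T. - g p) * (\<Prod>p\<in>prime_factors n - T. 1))"
  proof (rule sum.cong[OF refl])
    fix T assume T: "T \<in> Pow (prime_factors n)"
    then have T_primes: "finite T" "\<forall>p\<in>T. prime p"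
      using finite_subset[of T "prime_factors n"] by auto
    then show "(-1) ^ card T * g (\<Prod>T) = (\<Prod>p\<in>T. - g p) * (\<Prod>p\<in>prime_factors n - T. 1)"
      using g[OF T_primes] by (simp add: prod_uminus)
  qed
  also have "\<dots> = (\<Prod>p\<in>prime_factors n. - g p + 1)"
    by (rule prod_add[symmetric]) simp
  finally show ?thesis
    by simp
qed

lemma totient_div_eq_sum_moebius:
  fixes m :: nat
  assumes "m > 0"
  shows "real (totient m) / real m = (\<Sum>e | e dvd m. moebius e / real e)"
proof -
  have "(\<Sum>e | e dvd m. moebius e * (1 / real e)) = (\<Prod>p\<in>prime_factors m. 1 - 1 / real p)"
    using assms by (intro sum_divisors_moebius_multiplicative) (simp_all add: of_nat_prod prod_dividef)
  then show ?thesis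
    using assms by (simp add: totient_formula2)
qed

lemma sum_divisors_moebius:
  fixes n :: nat
  assumes "n > 0"
  shows "(\<Sum>e | e dvd n. moebius e) = (if n = 1 then 1 else 0)"
proof -
  have "(\<Sum>e | e dvd n. moebius e * 1) = (\<Prod>p\<in>prime_factors n. 1 - 1)"
    using assms by (rule sum_divisors_moebius_multiplicative) simp
  moreover have "n \<noteq> 1 \<Longrightarrow> prime_factors n \<noteq> {}"
    using assms prime_factor_nat[of n] by (auto simp: prime_factors_dvd)
  ultimately show ?thesis
    using assms by (cases "n = 1") (auto simp: prod_zero_iff card_gt_0_iff)
qed

lemma cong_class_atLeast_eq_range:
  fixes L N c :: nat
  assumes L: "L \<ge> 1"
  obtains k0 where "N \<le> k0" "k0 < N + L" "{k. N \<le> k \<and> [k = c] (mod L)} = range (\<lambda>j. k0 + j * L)"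
proof
  define k0 where "k0 = N + (c + L * N - N) mod L"
  show k0N: "N \<le> k0" "k0 < N + L"
    using L by (auto simp: k0_def)
  have "N \<le> L * N"
    using L by simp
  then have "N + (c + L * N - N) = c + L * N"
    by arith
  then have "k0 mod L = (c + L * N) mod L"
    unfolding k0_def by (metis mod_add_right_eq)
  then have k0c: "[k0 = c] (mod L)"
    by (simp add: cong_def)
  show "{k. N \<le> k \<and> [k = c] (mod L)} = range (\<lambda>j. k0 + j * L)"
  proof (intro equalityI subsetI)
    fix k assume "k \<in> {k. N \<le> k \<and> [k = c] (mod L)}"
    then have k: "N \<le> k" "[k = k0] (mod L)"
      using k0c by (auto intro: cong_trans cong_sym)
    then have "[k - N + N = k0 - N + N] (mod L)"
      using k0N by simp
    then have "[k - N = k0 - N] (mod L)"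
      using cong_add_rcancel_nat by blast
    then have "(k - N) mod L = k0 - N"
      using k0N by (simp add: cong_def)
    then have "k = k0 + ((k - N) div L) * L"
      using k k0N div_mult_mod_eq[of "k - N" L] by linarith
    then show "k \<in> range (\<lambda>j. k0 + j * L)"
      by blast
  next
    fix k assume "k \<in> range (\<lambda>j. k0 + j * L)"
    then obtain j where "k = k0 + j * L"
      by blast
    moreover have "[k0 + j * L = c] (mod L)"
      using k0c by (simp add: cong_def)
    ultimately show "k \<in> {k. N \<le> k \<and> [k = c] (mod L)}"
      using k0N by simp
  qed
qed

lemma cong_class_of_dvd_diff_mult:
  fixes X V :: int and n :: nat
  assumes n: "n > 0" and V: "coprime V (int n)" and X: "coprime X (int n)"
  obtains u :: nat where "coprime u n" and "\<And>m::nat. int n dvd X - int m * V \<longleftrightarrow> [m = u] (mod n)"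
proof -
  obtain V' where V': "[V * V' = 1] (mod int n)"
    using cong_solve_coprime_int[OF V] by blast
  define u where "u = nat ((X * V') mod int n)"
  have u: "[int u = X * V'] (mod int n)"
    using n by (simp add: u_def cong_def)
  have "coprime V' (int n)"
    using coprime_cong_cong_left[OF V'] by simp
  then have "coprime u n"
    using coprime_cong_cong_left[OF u] X by simp
  moreover have "int n dvd X - int m * V \<longleftrightarrow> [m = u] (mod n)" for m :: nat
  proof -
    have X_eq: "[X = X * V' * V] (mod int n)"
      using cong_scalar_left[OF V', of X] by (simp add: ac_simps cong_sym_eq)
    have "int n dvd X - int m * V \<longleftrightarrow> [int m * V = X * V' * V] (mod int n)"
      using X_eq by (metis cong_iff_dvd_diff cong_sym_eq cong_trans dvd_diff_commute)
    also have "\<dots> \<longleftrightarrow> [int m = X * V'] (mod int n)"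
      using V by (rule cong_mult_rcancel)
    also have "\<dots> \<longleftrightarrow> [m = u] (mod n)"
      using u by (metis cong_int_iff cong_sym cong_trans)
    finally show ?thesis .
  qed
  ultimately show ?thesis
    by (rule that)
qed

lemma coprime_prod_right_iff:
  fixes a :: "'a::semiring_gcd"
  assumes "finite A"
  shows "coprime a (\<Prod>i\<in>A. f i) \<longleftrightarrow> (\<forall>i\<in>A. coprime a (f i))"
proof
  assume "coprime a (\<Prod>i\<in>A. f i)"
  then show "\<forall>i\<in>A. coprime a (f i)"
    using assms by (blast intro: coprime_divisors[OF dvd_refl dvd_prodI])
qed (rule prod_coprime_right, blast)

lemma chinese_remainder_unit_classes:
  fixes M u :: "'a \<Rightarrow> nat"
  assumes fin: "finite I" and cop: "\<forall>i\<in>I. \<forall>j\<in>I. i \<noteq> j \<longrightarrow> coprime (M i) (M j)"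
    and units: "\<forall>i\<in>I. coprime (u i) (M i)"
  obtains b where "coprime b (\<Prod>i\<in>I. M i)"
    and "\<And>m. (\<forall>i\<in>I. [m = u i] (mod M i)) \<longleftrightarrow> [m = b] (mod \<Prod>i\<in>I. M i)"
proof -
  obtain b where b: "\<forall>i\<in>I. [b = u i] (mod M i)"
    using chinese_remainder_nat[OF fin cop] by blast
  have "coprime b (M i)" if "i \<in> I" for i
    using b units that coprime_cong_cong_left[of b "u i" "M i"] by auto
  then have "coprime b (\<Prod>i\<in>I. M i)"
    by (rule prod_coprime_right)
  moreover have "(\<forall>i\<in>I. [m = u i] (mod M i)) \<longleftrightarrow> [m = b] (mod \<Prod>i\<in>I. M i)" for m
  proof
    assume "\<forall>i\<in>I. [m = u i] (mod M i)"
    then show "[m = b] (mod \<Prod>i\<in>I. M i)"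
      using cop b by (intro coprime_cong_prod_nat) (auto simp: cong_sym_eq intro: cong_trans)
  next
    assume "[m = b] (mod \<Prod>i\<in>I. M i)"
    then have "[m = b] (mod M i)" if "i \<in> I" for i
      using fin that by (auto intro: cong_dvd_modulus_nat dvd_prodI)
    then show "\<forall>i\<in>I. [m = u i] (mod M i)"
      using b by (auto intro: cong_trans)
  qed
  ultimately show ?thesis
    by (rule that)
qed

section \<open>Sums of inverse squares\<close>

lemma summable_inverse_square: "summable (\<lambda>k::nat. 1 / real k ^ 2)"
  using inverse_power_summable[of 2, where 'a=real] by (simp add: divide_inverse)

lemma inverse_square_summable_on: "(\<lambda>k::nat. 1 / real k ^ 2) summable_on A"
proof -
  have "(\<lambda>k::nat. 1 / real k ^ 2) summable_on UNIV"
    using summable_inverse_square by (subst summable_on_UNIV_nonneg_real_iff) auto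
  then show ?thesis
    by (rule summable_on_subset) auto
qed

lemma summable_on_dominated:
  fixes f :: "'a \<Rightarrow> 'b::banach"
  assumes "g summable_on A" "\<And>x. x \<in> A \<Longrightarrow> norm (f x) \<le> g x"
  shows "f summable_on A"
  using Infinite_Sum.abs_summable_on_comparison_test'[OF assms] abs_summable_summable by blast

lemma summable_on_inverse_square_bound:
  fixes f :: "nat \<Rightarrow> real"
  assumes "\<And>e. e \<in> A \<Longrightarrow> \<bar>f e\<bar> \<le> C / real e ^ 2"
  shows "f summable_on A"
proof (rule summable_on_dominated)
  show "(\<lambda>e. C * (1 / real e ^ 2)) summable_on A"
    by (rule summable_on_cmult_right[OF inverse_square_summable_on])
qed (use assms in simp)

lemma abs_infsum_le_dominating:
  fixes f :: "'a \<Rightarrow> real"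
  assumes w: "w summable_on A" and f: "\<And>x. x \<in> A \<Longrightarrow> \<bar>f x\<bar> \<le> w x"
  shows "\<bar>infsum f A\<bar> \<le> infsum w A"
proof -
  have "(\<lambda>x. norm (f x)) summable_on A"
    by (rule Infinite_Sum.abs_summable_on_comparison_test'[OF w]) (simp add: f)
  then have "\<bar>infsum f A\<bar> \<le> infsum (\<lambda>x. \<bar>f x\<bar>) A"
    using norm_infsum_bound[of f A] by simp
  also have "\<dots> \<le> infsum w A"
    by (rule infsum_mono) (use \<open>(\<lambda>x. norm (f x)) summable_on A\<close> w f in auto)
  finally show ?thesis .
qed

lemma summable_on_inverse_square_pairs_bound:
  fixes h :: "nat \<Rightarrow> nat \<Rightarrow> real"
  assumes "\<And>e k. \<bar>h e k\<bar> \<le> 1 / real e ^ 2 * (1 / real k ^ 2)"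
  shows "(\<lambda>(e, k). h e k) summable_on A"
proof -
  define Z where "Z = infsum (\<lambda>k::nat. 1 / real k ^ 2) UNIV"
  have "(\<lambda>(e, k). 1 / real e ^ 2 * (1 / real k ^ 2)) summable_on UNIV \<times> UNIV"
  proof (rule summable_on_SigmaI)
    show "((\<lambda>k. (\<lambda>(e, k). 1 / real e ^ 2 * (1 / real k ^ 2 :: real)) (e, k)) has_sum 1 / real e ^ 2 * Z) UNIV"
      for e :: nat
      using has_sum_cmult_right[OF has_sum_infsum[OF inverse_square_summable_on[of UNIV]], of "1 / real e ^ 2"]
      by (simp add: Z_def)
    show "(\<lambda>e::nat. 1 / real e ^ 2 * Z) summable_on UNIV"
      by (rule summable_on_cmult_left[OF inverse_square_summable_on])
  qed auto
  then have "(\<lambda>(e, k). 1 / real e ^ 2 * (1 / real k ^ 2)) summable_on A"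
    by (rule summable_on_subset) auto
  then show ?thesis
    by (rule summable_on_dominated) (use assms in auto)
qed

lemma infsum_divisor_sum_swap:
  fixes h :: "nat \<Rightarrow> nat \<Rightarrow> real"
  assumes A: "0 \<notin> A" and h: "\<And>e k. \<bar>h e k\<bar> \<le> 1 / real e ^ 2 * (1 / real k ^ 2)"
  shows "infsum (\<lambda>m. \<Sum>e | e dvd m. h e (m div e)) A
           = infsum (\<lambda>e. infsum (h e) {k. e * k \<in> A}) {e. 0 < e}"
proof -
  define P where "P = Sigma {e. 0 < e} (\<lambda>e. {k. e * k \<in> A})"
  define D where "D = Sigma A (\<lambda>m. {e. e dvd m})"
  have reindex: "\<And>a. a \<in> P \<Longrightarrow> (\<lambda>(m, e). (e, m div e)) ((\<lambda>(e, k). (e * k, e)) a) = a"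
    "\<And>a. a \<in> P \<Longrightarrow> (\<lambda>(e, k). (e * k, e)) a \<in> D"
    "\<And>b. b \<in> D \<Longrightarrow> (\<lambda>(e, k). (e * k, e)) ((\<lambda>(m, e). (e, m div e)) b) = b"
    "\<And>b. b \<in> D \<Longrightarrow> (\<lambda>(m, e). (e, m div e)) b \<in> P"
    using A by (auto simp: P_def D_def elim!: dvdE intro!: gr0I)
  have bij: "infsum (\<lambda>(e, k). h e k) P = infsum (\<lambda>(m, e). h e (m div e)) D"
    by (rule infsum_reindex_bij_witness[OF reindex]) (use A in \<open>auto simp: P_def\<close>)
  have "(\<lambda>(e, k). h e k) summable_on P \<longleftrightarrow> (\<lambda>(m, e). h e (m div e)) summable_on D"
    by (rule summable_on_reindex_bij_witness[OF reindex]) (use A in \<open>auto simp: P_def\<close>)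
  moreover have "(\<lambda>(e, k). h e k) summable_on P"
    by (rule summable_on_inverse_square_pairs_bound[OF h])
  ultimately have "(\<lambda>(m, e). h e (m div e)) summable_on D"
    by simp
  then have "infsum (\<lambda>m. infsum (\<lambda>e. h e (m div e)) {e. e dvd m}) A = infsum (\<lambda>(e, k). h e k) P"
    unfolding bij D_def by (rule infsum_Sigma'_banach)
  also have "\<dots> = infsum (\<lambda>e. infsum (h e) {k. e * k \<in> A}) {e. 0 < e}"
    unfolding P_def by (rule infsum_Sigma'_banach[symmetric]) (rule summable_on_inverse_square_pairs_bound[OF h])
  also have "infsum (\<lambda>m. infsum (\<lambda>e. h e (m div e)) {e. e dvd m}) A
               = infsum (\<lambda>m. \<Sum>e | e dvd m. h e (m div e)) A"
    using A by (intro infsum_cong infsum_finite finite_divisors_nat) (auto intro: gr0I)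
  finally show ?thesis .
qed

lemma infsum_totient_cube_eq:
  assumes "0 \<notin> A"
  shows "infsum (\<lambda>m. real (totient m) / real m ^ 3) A
           = infsum (\<lambda>e. moebius e / real e ^ 3 * infsum (\<lambda>k. 1 / real k ^ 2) {k. e * k \<in> A}) {e. 0 < e}"
proof -
  have "infsum (\<lambda>m. real (totient m) / real m ^ 3) A
          = infsum (\<lambda>m. \<Sum>e | e dvd m. moebius e / real e ^ 3 * (1 / real (m div e) ^ 2)) A"
  proof (rule infsum_cong)
    fix m assume "m \<in> A"
    then have m: "m > 0"
      using assms by (auto intro: gr0I)
    have "real (totient m) / real m ^ 3 = (real (totient m) / real m) / real m ^ 2"
      by (simp add: power2_eq_square power3_eq_cube)
    also have "\<dots> = (\<Sum>e | e dvd m. moebius e / real e) / real m ^ 2"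
      by (simp add: totient_div_eq_sum_moebius[OF m])
    also have "\<dots> = (\<Sum>e | e dvd m. moebius e / real e ^ 3 * (1 / real (m div e) ^ 2))"
      unfolding sum_divide_distrib
    proof (rule sum.cong[OF refl])
      fix e assume "e \<in> {e. e dvd m}"
      then obtain k where "m = e * k"
        by blast
      then show "moebius e / real e / real m ^ 2 = moebius e / real e ^ 3 * (1 / real (m div e) ^ 2)"
        using m by (simp add: power2_eq_square power3_eq_cube)
    qed
    finally show "real (totient m) / real m ^ 3 = \<dots>" .
  qed
  also have "\<dots> = infsum (\<lambda>e. infsum (\<lambda>k. moebius e / real e ^ 3 * (1 / real k ^ 2)) {k. e * k \<in> A}) {e. 0 < e}"
  proof (rule infsum_divisor_sum_swap[OF assms])
    fix e k :: nat
    have "\<bar>moebius e\<bar> / real e ^ 3 \<le> 1 / real e ^ 3"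
      by (rule divide_right_mono[OF abs_moebius_le]) simp
    also have "\<dots> \<le> 1 / real e ^ 2"
      by (cases "e = 0") (auto intro!: divide_left_mono power_increasing)
    finally have "\<bar>moebius e\<bar> / real e ^ 3 * (1 / real k ^ 2) \<le> 1 / real e ^ 2 * (1 / real k ^ 2)"
      by (rule mult_right_mono) simp
    then show "\<bar>moebius e / real e ^ 3 * (1 / real k ^ 2)\<bar> \<le> 1 / real e ^ 2 * (1 / real k ^ 2)"
      by (simp only: abs_mult abs_divide abs_of_nat power_abs abs_one)
  qed
  finally show ?thesis
    by (simp only: infsum_cmult_right')
qed

lemma infsum_moebius_coprime_mult_zeta:
  "infsum (\<lambda>e. moebius e / real e ^ 2) {e. 0 < e \<and> coprime e L}
     * infsum (\<lambda>k. 1 / real k ^ 2) {k. 0 < k \<and> coprime k L} = 1"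
proof -
  define A where "A = {m. 0 < m \<and> coprime m L}"
  have "infsum (\<lambda>m. \<Sum>e | e dvd m. moebius e / real e ^ 2 * (1 / real (m div e) ^ 2)) A
          = infsum (\<lambda>m. if m = 1 then 1 else 0) A"
  proof (rule infsum_cong)
    fix m assume "m \<in> A"
    then have m: "m > 0"
      by (simp add: A_def)
    have "(\<Sum>e | e dvd m. moebius e / real e ^ 2 * (1 / real (m div e) ^ 2))
            = (\<Sum>e | e dvd m. moebius e) / real m ^ 2"
      unfolding sum_divide_distrib
      by (rule sum.cong[OF refl]) (use m in \<open>auto simp: power_mult_distrib elim!: dvdE\<close>)
    then show "(\<Sum>e | e dvd m. moebius e / real e ^ 2 * (1 / real (m div e) ^ 2)) = (if m = 1 then 1 else 0)"
      using sum_divisors_moebius[OF m] by simp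
  qed
  also have "\<dots> = 1"
    by (subst infsum_cong_neutral[where T = "{1}" and g = "\<lambda>_. 1"]) (auto simp: A_def)
  finally have "1 = infsum (\<lambda>e. infsum (\<lambda>k. moebius e / real e ^ 2 * (1 / real k ^ 2)) {k. e * k \<in> A}) {e. 0 < e}"
    using abs_moebius_le
    by (subst (asm) infsum_divisor_sum_swap) (auto simp: A_def abs_mult divide_right_mono mult_right_mono)
  also have "\<dots> = infsum (\<lambda>e. moebius e / real e ^ 2 * infsum (\<lambda>k. 1 / real k ^ 2) A) {e. 0 < e \<and> coprime e L}"
  proof (rule infsum_cong_neutral)
    fix e assume "e \<in> {e. 0 < e} - {e. 0 < e \<and> coprime e L}"
    then have "{k. e * k \<in> A} = {}"
      by (auto simp: A_def)
    then show "infsum (\<lambda>k. moebius e / real e ^ 2 * (1 / real k ^ 2)) {k. e * k \<in> A} = 0"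
      by simp
  next
    fix e assume "e \<in> {e. 0 < e} \<inter> {e. 0 < e \<and> coprime e L}"
    then have "{k. e * k \<in> A} = A"
      by (auto simp: A_def)
    then show "infsum (\<lambda>k. moebius e / real e ^ 2 * (1 / real k ^ 2)) {k. e * k \<in> A}
                 = moebius e / real e ^ 2 * infsum (\<lambda>k. 1 / real k ^ 2) A"
      by (simp only: infsum_cmult_right')
  qed auto
  finally show ?thesis
    unfolding infsum_cmult_left' A_def by (rule sym)
qed

section \<open>Inverse squares along an arithmetic progression\<close>

lemma progression_telescoping_sums:
  fixes L k0 :: nat
  assumes L: "L \<ge> 1" and k0: "k0 \<ge> 1"
  shows "(\<lambda>j. 1 / (real (k0 + j * L) * real (k0 + Suc j * L))) sums (1 / (real L * real k0))"
proof -
  define t where "t = (\<lambda>j::nat. 1 / (real L * real (k0 + j * L)))"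
  have "t \<longlonglongrightarrow> 0"
    unfolding t_def using L by real_asymp
  then have "(\<lambda>j. t j - t (Suc j)) sums (t 0)"
    using telescope_sums'[of t 0] by simp
  moreover have "t j - t (Suc j) = 1 / (real (k0 + j * L) * real (k0 + Suc j * L))" for j
  proof -
    define a where "a = real (k0 + j * L)"
    have "a > 0"
      unfolding a_def of_nat_0_less_iff using k0 by simp
    moreover have Suc_eq: "real (k0 + Suc j * L) = a + real L"
      by (simp add: a_def)
    ultimately show ?thesis
      unfolding t_def Suc_eq a_def[symmetric] using L by (simp add: divide_simps)
  qed
  ultimately show ?thesis
    by (simp add: t_def)
qed

lemma progression_inverse_square_bounds:
  fixes L k0 :: nat
  assumes L: "L \<ge> 1" and k0: "k0 \<ge> 1"
  defines "f \<equiv> \<lambda>j::nat. 1 / real (k0 + j * L) ^ 2"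
  shows "summable f"
    and "1 / (real L * k0) \<le> suminf f"
    and "suminf f \<le> 1 / (real L * k0) + 1 / real k0 ^ 2"
proof -
  note tel = progression_telescoping_sums[OF L k0]
  have pos: "real (k0 + j * L) > 0" for j
    unfolding of_nat_0_less_iff using k0 by simp
  have mono: "real (k0 + j * L) \<le> real (k0 + Suc j * L)" for j
    by simp
  have below: "f (Suc j) \<le> 1 / (real (k0 + j * L) * real (k0 + Suc j * L))" for j
    unfolding f_def power2_eq_square
    using pos[of j] mono[of j] by (intro divide_left_mono mult_right_mono mult_pos_pos) auto
  have above: "1 / (real (k0 + j * L) * real (k0 + Suc j * L)) \<le> f j" for j
    unfolding f_def power2_eq_square
    using pos[of j] mono[of j] by (intro divide_left_mono mult_left_mono mult_pos_pos) auto
  have "summable (\<lambda>j. f (Suc j))"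
    using below by (intro summable_comparison_test'[OF sums_summable[OF tel]]) (auto simp: f_def)
  then show sf: "summable f"
    by (subst (asm) summable_Suc_iff)
  show "1 / (real L * k0) \<le> suminf f"
    using sums_le[OF above tel summable_sums[OF sf]] .
  have "(\<Sum>j. f (Suc j)) \<le> 1 / (real L * k0)"
    using sums_le[OF below summable_sums tel] sf by (simp add: summable_Suc_iff)
  then show "suminf f \<le> 1 / (real L * k0) + 1 / real k0 ^ 2"
    using suminf_split_head[OF sf] by (simp add: f_def)
qed

text \<open>The tail of \<open>\<Sum>\<^sub>j 1/(k + j l)\<^sup>2\<close> is pinned between \<open>1/(l k)\<close> and \<open>1/(l k) + 1/k\<^sup>2\<close>; moving
  the first term \<open>k\<close> of the progression to the cut-off \<open>Z\<close> costs \<open>O(1/Z\<^sup>2)\<close>.\<close>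

lemma abs_sub_inverse_le_of_bounds:
  fixes s l k Z :: real
  assumes l: "l \<ge> 1" and Z: "Z \<ge> 1" and k: "Z \<le> k" "k \<le> Z + l + 1"
    and lower: "1 / (l * k) \<le> s" and upper: "s \<le> 1 / (l * k) + 1 / k ^ 2"
  shows "\<bar>s - 1 / (l * Z)\<bar> \<le> 2 / Z ^ 2"
proof -
  have "1 / (l * Z) - 1 / (l * k) = (k - Z) / (l * Z * k)"
    using l Z k by (simp add: divide_simps)
  also have "\<dots> \<le> (2 * l) / (l * Z * k)"
    using l Z k by (intro divide_right_mono) auto
  also have "\<dots> = 2 / (Z * k)"
    using l by simp
  also have "\<dots> \<le> 2 / Z ^ 2"
    using Z k by (intro divide_left_mono) (auto simp: power2_eq_square intro: mult_left_mono)
  finally have "1 / (l * Z) - 2 / Z ^ 2 \<le> 1 / (l * k)"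
    by simp
  moreover have "1 / (l * k) \<le> 1 / (l * Z)"
    using l Z k by (intro divide_left_mono mult_left_mono mult_pos_pos) auto
  moreover have "1 / k ^ 2 \<le> 1 / Z ^ 2"
    using Z k by (intro divide_left_mono power_mono) auto
  moreover have "1 / Z ^ 2 \<le> 2 / Z ^ 2"
    by (simp add: divide_right_mono)
  ultimately show ?thesis
    using lower upper unfolding abs_le_iff by linarith
qed

lemma progression_tail_inverse_square:
  fixes L c :: nat and Z :: real
  assumes L: "L \<ge> 1" and Z: "Z \<ge> 1"
  shows "\<bar>infsum (\<lambda>k. 1 / real k ^ 2) {k. 0 < k \<and> Z \<le> real k \<and> [k = c] (mod L)} - 1 / (real L * Z)\<bar>
           \<le> 2 / Z ^ 2"
proof -
  define N where "N = nat \<lceil>Z\<rceil>"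
  have N: "Z \<le> real N" "real N < Z + 1" "N \<ge> 1"
    using Z unfolding N_def by linarith+
  obtain k0 where k0: "N \<le> k0" "k0 < N + L"
    and range: "{k. N \<le> k \<and> [k = c] (mod L)} = range (\<lambda>j. k0 + j * L)"
    using cong_class_atLeast_eq_range[OF L] .
  have "0 < k \<and> Z \<le> real k \<longleftrightarrow> N \<le> k" for k
    using N by (auto simp: N_def)
  then have set_eq: "{k. 0 < k \<and> Z \<le> real k \<and> [k = c] (mod L)} = range (\<lambda>j. k0 + j * L)"
    unfolding range[symmetric] by blast
  define f where "f = (\<lambda>j::nat. 1 / real (k0 + j * L) ^ 2)"
  have k0_pos: "k0 \<ge> 1"
    using N k0 by simp
  note bounds = progression_inverse_square_bounds[OF L k0_pos, folded f_def]
  have "inj (\<lambda>j. k0 + j * L)"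
    using L by (auto simp: inj_def)
  then have "infsum (\<lambda>k. 1 / real k ^ 2) (range (\<lambda>j. k0 + j * L)) = infsum f UNIV"
    by (simp add: infsum_reindex f_def o_def)
  also have "\<dots> = suminf f"
    by (rule infsumI, rule sums_nonneg_imp_has_sum[OF summable_sums[OF bounds(1)]]) (simp add: f_def)
  finally have sum_eq: "infsum (\<lambda>k. 1 / real k ^ 2) {k. 0 < k \<and> Z \<le> real k \<and> [k = c] (mod L)} = suminf f"
    unfolding set_eq .
  have "Z \<le> real k0" "real k0 \<le> Z + real L + 1"
    using N k0 by linarith+
  from abs_sub_inverse_le_of_bounds[OF _ Z this bounds(2,3)] L show ?thesis
    unfolding sum_eq by simp
qed

lemma multiples_progression_tail:
  fixes L b e :: nat and Y :: real
  assumes L: "L \<ge> 1" and e: "e > 0" "coprime e L" and Y: "Y > 0"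
  shows "\<bar>infsum (\<lambda>k. 1 / real k ^ 2) {k. 0 < e * k \<and> Y \<le> real (e * k) \<and> [e * k = b] (mod L)}
            - real e / (real L * Y)\<bar>
           \<le> (if real e \<le> Y then 2 * real e ^ 2 / Y ^ 2 else 3 * real e / Y)"
proof -
  obtain x where x: "[e * x = 1] (mod L)"
    using cong_solve_coprime_nat[OF e(2)] by auto
  then have "[e * (x * b) = b] (mod L)"
    using cong_scalar_right[OF x, of b] by (simp add: mult.assoc)
  then have "[e * k = b] (mod L) \<longleftrightarrow> [e * k = e * (x * b)] (mod L)" for k
    by (meson cong_sym cong_trans)
  then have "[e * k = b] (mod L) \<longleftrightarrow> [k = x * b] (mod L)" for k
    using cong_mult_lcancel_nat[OF e(2)] by simp
  moreover have "Y \<le> real (e * k) \<longleftrightarrow> Y / real e \<le> real k" for k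
    using e by (simp add: divide_le_eq mult.commute)
  moreover have "0 < e * k \<longleftrightarrow> 0 < k" for k
    using e by simp
  ultimately have set_eq: "{k. 0 < e * k \<and> Y \<le> real (e * k) \<and> [e * k = b] (mod L)}
                          = {k. 0 < k \<and> Y / real e \<le> real k \<and> [k = x * b] (mod L)}"
    by blast
  show ?thesis
  proof (cases "real e \<le> Y")
    case True
    then have "Y / real e \<ge> 1"
      using e by simp
    from progression_tail_inverse_square[OF L this, of "x * b"] show ?thesis
      unfolding set_eq using True e by (simp add: power_divide)
  next
    case False
    then have "Y / real e \<le> 1"
      using e by simp
    then have "{k. 0 < k \<and> Y / real e \<le> real k \<and> [k = x * b] (mod L)}
                 = {k. 0 < k \<and> 1 \<le> real k \<and> [k = x * b] (mod L)}"
      by (auto intro: order_trans)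
    moreover have "\<bar>1 / (real L * 1) - real e / (real L * Y)\<bar> \<le> real e / Y"
    proof -
      have "1 / real L \<le> real e / (real L * Y)"
        using L Y False by (simp add: divide_simps)
      moreover have "real e / (real L * Y) \<le> real e / Y"
        using L Y by (intro divide_left_mono) auto
      moreover have "0 \<le> 1 / real L"
        by simp
      ultimately show ?thesis
        unfolding mult_1_right abs_le_iff by linarith
    qed
    moreover have "2 \<le> 2 * real e / Y"
      using Y False by (simp add: le_divide_eq)
    ultimately show ?thesis
      using progression_tail_inverse_square[OF L order.refl, of "x * b"] False
      unfolding set_eq by (simp add: abs_le_iff)
  qed
qed

section \<open>The totient series over a tail of a residue class\<close>

lemma sum_inverse_le_1_plus_ln:
  assumes "n \<ge> 1"
  shows "(\<Sum>e\<in>{1..n}. 1 / real e) \<le> 1 + ln (real n)"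
proof -
  have "harm n - ln (real n) \<le> harm 1 - ln (real (1::nat))"
    using euler_mascheroni_sequence_decreasing[of 1 n] assms by simp
  moreover have "harm n = (\<Sum>e\<in>{1..n}. 1 / real e)"
    by (simp add: harm_def divide_inverse)
  ultimately show ?thesis
    by (simp add: harm_def)
qed

lemma infsum_inverse_square_tail_le:
  fixes Y :: real
  assumes Y: "Y \<ge> 2"
  shows "infsum (\<lambda>e. 1 / real e ^ 2) {e. Y < real e} \<le> 2 / Y"
proof -
  have "infsum (\<lambda>e. 1 / real e ^ 2) {e. Y < real e}
          \<le> infsum (\<lambda>k. 1 / real k ^ 2) {k. 0 < k \<and> Y \<le> real k \<and> [k = 0] (mod 1)}"
    using Y by (intro infsum_mono_neutral inverse_square_summable_on) auto
  also have "\<dots> \<le> 1 / (1 * Y) + 2 / Y ^ 2"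
    using progression_tail_inverse_square[OF order.refl, of Y 0] Y by (simp add: abs_le_iff)
  also have "\<dots> \<le> 2 / Y"
    using Y by (simp add: divide_simps power2_eq_square)
  finally show ?thesis .
qed

text \<open>Bounds the \<open>e\<close>-th term of the error in the main estimate: it is \<open>e\<^sup>-\<^sup>3\<close> times
  \<open>2 e\<^sup>2/Y\<^sup>2\<close> resp. \<open>3 e/Y\<close> from \<open>multiples_progression_tail\<close>.\<close>

definition error_weight :: "real \<Rightarrow> nat \<Rightarrow> real" where
  "error_weight Y e = (if real e \<le> Y then 2 / (real e * Y ^ 2) else 3 / (Y * real e ^ 2))"

lemma error_weight_summable:
  assumes Y: "Y \<ge> 1"
  shows "error_weight Y summable_on {e. 0 < e}"
proof (rule summable_on_inverse_square_bound)
  fix e :: nat assume "e \<in> {e. 0 < e}"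
  then have e: "real e \<ge> 1"
    by simp
  show "\<bar>error_weight Y e\<bar> \<le> 3 / real e ^ 2"
  proof (cases "real e \<le> Y")
    case True
    have "Y * 1 \<le> Y * Y"
      using Y by (intro mult_left_mono) auto
    with True have "real e * real e \<le> real e * Y ^ 2"
      by (intro mult_left_mono) (auto simp: power2_eq_square)
    then have "2 / (real e * Y ^ 2) \<le> 3 / (real e * real e)"
      using e by (intro frac_le) auto
    then show ?thesis
      using True Y e by (simp add: error_weight_def power2_eq_square)
  next
    case False
    then show ?thesis
      using Y e by (simp add: error_weight_def frac_le)
  qed
qed

text \<open>The harmonic sum over \<open>e \<le> Y\<close> is where the \<open>ln Y\<close> of the error term comes from.\<close>

lemma infsum_error_weight_le:
  assumes Y: "Y \<ge> 2"
  shows "infsum (error_weight Y) {e. 0 < e} \<le> (8 + 2 * ln Y) / Y ^ 2"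
proof -
  define n where "n = nat \<lfloor>Y\<rfloor>"
  have n: "real n \<le> Y" "n \<ge> 1"
    using Y unfolding n_def by linarith+
  have le_n: "real e \<le> Y \<longleftrightarrow> e \<le> n" for e
    using Y le_floor_iff[of "int e" Y] le_nat_iff[of "\<lfloor>Y\<rfloor>" e] by (simp add: n_def)
  have split: "{e. 0 < e} = {1..n} \<union> {e. Y < real e}"
  proof (intro equalityI subsetI)
    fix e :: nat assume "e \<in> {e. 0 < e}"
    then show "e \<in> {1..n} \<union> {e. Y < real e}"
      using le_n[of e] by (cases "e \<le> n") auto
  qed (use Y in \<open>auto intro: gr0I\<close>)
  have "{1..n} \<inter> {e. Y < real e} = {}"
    by (auto simp: le_n[symmetric])
  then have "infsum (error_weight Y) {e. 0 < e} = sum (error_weight Y) {1..n} + infsum (error_weight Y) {e. Y < real e}"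
    using error_weight_summable[of Y] Y unfolding split
    by (subst infsum_Un_disjoint) (auto intro: summable_on_subset)
  also have "sum (error_weight Y) {1..n} = 2 / Y ^ 2 * (\<Sum>e\<in>{1..n}. 1 / real e)"
    unfolding sum_distrib_left by (rule sum.cong) (auto simp: error_weight_def le_n[symmetric])
  also have "\<dots> \<le> 2 / Y ^ 2 * (1 + ln Y)"
  proof (rule mult_left_mono)
    have "ln (real n) \<le> ln Y"
      using n by simp
    then show "(\<Sum>e\<in>{1..n}. 1 / real e) \<le> 1 + ln Y"
      using sum_inverse_le_1_plus_ln[OF n(2)] by linarith
  qed simp
  also have "infsum (error_weight Y) {e. Y < real e} = 3 / Y * infsum (\<lambda>e. 1 / real e ^ 2) {e. Y < real e}"
    unfolding infsum_cmult_right'[symmetric] by (rule infsum_cong) (simp add: error_weight_def)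
  also have "\<dots> \<le> 3 / Y * (2 / Y)"
    using infsum_inverse_square_tail_le[OF Y] Y by (intro mult_left_mono) auto
  finally show ?thesis
    using Y by (simp add: field_simps power2_eq_square)
qed

lemma moebius_progression_tail_error:
  fixes L b e :: nat and Y :: real
  assumes L: "L \<ge> 1" and b: "coprime b L" and Y: "Y > 0" and e: "e > 0"
  shows "\<bar>moebius e / real e ^ 3 *
            (infsum (\<lambda>k. 1 / real k ^ 2) {k. 0 < e * k \<and> Y \<le> real (e * k) \<and> [e * k = b] (mod L)}
             - (if coprime e L then real e / (real L * Y) else 0))\<bar>
         \<le> error_weight Y e"
proof (cases "coprime e L")
  case False
  have "\<not> [e * k = b] (mod L)" for k
    using coprime_cong_cong_left[of "e * k" b L] b False by auto
  then have empty: "{k. 0 < e * k \<and> Y \<le> real (e * k) \<and> [e * k = b] (mod L)} = {}"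
    by simp
  show ?thesis
    using False Y by (simp only: empty) (simp add: error_weight_def)
next
  case True
  let ?bound = "if real e \<le> Y then 2 * real e ^ 2 / Y ^ 2 else 3 * real e / Y"
  let ?T = "infsum (\<lambda>k. 1 / real k ^ 2) {k. 0 < e * k \<and> Y \<le> real (e * k) \<and> [e * k = b] (mod L)}"
  have "\<bar>moebius e / real e ^ 3 * (?T - real e / (real L * Y))\<bar>
          = \<bar>moebius e\<bar> * (\<bar>?T - real e / (real L * Y)\<bar> / real e ^ 3)"
    by (simp add: abs_mult)
  also have "\<dots> \<le> 1 * (?bound / real e ^ 3)"
    using multiples_progression_tail[OF L e True Y, of b] abs_moebius_le[of e]
    by (intro mult_mono divide_right_mono) auto
  also have "\<dots> = error_weight Y e"
    using e by (simp add: error_weight_def power2_eq_square power3_eq_cube)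
  finally show ?thesis
    using True by simp
qed

lemma moebius_coprime_main_term:
  fixes L :: nat and Y :: real
  assumes L: "L \<ge> 1" and Y: "Y > 0"
  defines "P \<equiv> \<lambda>e. if coprime e L then real e / (real L * Y) else 0"
  shows "(\<lambda>e. moebius e / real e ^ 3 * P e) summable_on {e. 0 < e}"
    and "infsum (\<lambda>e. moebius e / real e ^ 3 * P e) {e. 0 < e}
           = 1 / (real L * Y * infsum (\<lambda>m. 1 / real m ^ 2) {m. 0 < m \<and> coprime m L})"
proof -
  show "(\<lambda>e. moebius e / real e ^ 3 * P e) summable_on {e. 0 < e}"
  proof (rule summable_on_inverse_square_bound)
    fix e :: nat assume "e \<in> {e. 0 < e}"
    then show "\<bar>moebius e / real e ^ 3 * P e\<bar> \<le> (1 / (real L * Y)) / real e ^ 2"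
      using abs_moebius_le[of e] L Y
      by (auto simp: P_def abs_mult power2_eq_square power3_eq_cube mult.assoc intro!: divide_right_mono)
  qed
  define M where "M = infsum (\<lambda>e. moebius e / real e ^ 2) {e. 0 < e \<and> coprime e L}"
  define Z where "Z = infsum (\<lambda>m. 1 / real m ^ 2) {m. 0 < m \<and> coprime m L}"
  have "M * Z = 1"
    unfolding M_def Z_def by (rule infsum_moebius_coprime_mult_zeta)
  then have M_eq: "M = 1 / Z"
    by (auto simp: eq_divide_eq)
  have "infsum (\<lambda>e. moebius e / real e ^ 3 * P e) {e. 0 < e}
          = infsum (\<lambda>e. moebius e / real e ^ 2 * (1 / (real L * Y))) {e. 0 < e \<and> coprime e L}"
    by (rule infsum_cong_neutral) (auto simp: P_def power2_eq_square power3_eq_cube)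
  also have "\<dots> = M * (1 / (real L * Y))"
    unfolding M_def by (rule infsum_cmult_left')
  finally show "infsum (\<lambda>e. moebius e / real e ^ 3 * P e) {e. 0 < e} = 1 / (real L * Y * Z)"
    by (simp add: M_eq)
qed

lemma totient_cube_progression_tail_error:
  fixes L b :: nat and Y :: real
  assumes L: "L \<ge> 1" and b: "coprime b L" and Y: "Y \<ge> 2"
  shows "\<bar>infsum (\<lambda>m. real (totient m) / real m ^ 3) {m. 0 < m \<and> Y \<le> real m \<and> [m = b] (mod L)}
           - 1 / (real L * Y * infsum (\<lambda>m. 1 / real m ^ 2) {m. 0 < m \<and> coprime m L})\<bar>
         \<le> (8 + 2 * ln Y) / Y ^ 2"
proof -
  define A where "A = {m. 0 < m \<and> Y \<le> real m \<and> [m = b] (mod L)}"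
  define T where "T e = infsum (\<lambda>k. 1 / real k ^ 2) {k. e * k \<in> A}" for e
  define P where "P e = (if coprime e L then real e / (real L * Y) else 0)" for e
  have Y_pos: "Y > 0"
    using Y by simp
  note main = moebius_coprime_main_term[OF L Y_pos, folded P_def]
  have weight_summable: "error_weight Y summable_on {e. 0 < e}"
    using Y by (intro error_weight_summable) simp
  have error: "\<bar>moebius e / real e ^ 3 * (T e - P e)\<bar> \<le> error_weight Y e" if "e \<in> {e. 0 < e}" for e
    using moebius_progression_tail_error[OF L b Y_pos, of e] that by (simp add: T_def P_def A_def)
  have error_summable: "(\<lambda>e. moebius e / real e ^ 3 * (T e - P e)) summable_on {e. 0 < e}"
    by (rule summable_on_dominated[OF weight_summable]) (use error in auto)
  have "infsum (\<lambda>m. real (totient m) / real m ^ 3) A = infsum (\<lambda>e. moebius e / real e ^ 3 * T e) {e. 0 < e}"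
    unfolding T_def by (rule infsum_totient_cube_eq) (simp add: A_def)
  also have "\<dots> = infsum (\<lambda>e. moebius e / real e ^ 3 * (T e - P e) + moebius e / real e ^ 3 * P e) {e. 0 < e}"
    by (rule infsum_cong) (simp add: right_diff_distrib)
  also have "\<dots> = infsum (\<lambda>e. moebius e / real e ^ 3 * (T e - P e)) {e. 0 < e}
                   + 1 / (real L * Y * infsum (\<lambda>m. 1 / real m ^ 2) {m. 0 < m \<and> coprime m L})"
    by (simp only: infsum_add[OF error_summable main(1)] main(2))
  finally have "\<bar>infsum (\<lambda>m. real (totient m) / real m ^ 3) A
                   - 1 / (real L * Y * infsum (\<lambda>m. 1 / real m ^ 2) {m. 0 < m \<and> coprime m L})\<bar>
                  = \<bar>infsum (\<lambda>e. moebius e / real e ^ 3 * (T e - P e)) {e. 0 < e}\<bar>"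
    by simp
  also have "\<dots> \<le> infsum (error_weight Y) {e. 0 < e}"
    by (rule abs_infsum_le_dominating[OF weight_summable error])
  finally show ?thesis
    using infsum_error_weight_le[OF Y] by (simp add: A_def)
qed

theorem totient_cube_progression_tail:
  fixes L b :: nat and Y :: real
  assumes L: "L \<ge> 1" and b: "coprime b L" and Y: "Y \<ge> 3"
  shows "\<bar>Y * infsum (\<lambda>m. real (totient m) / real m ^ 3) {m. 0 < m \<and> Y \<le> real m \<and> [m = b] (mod L)}
           - 1 / (real L * infsum (\<lambda>m. 1 / real m ^ 2) {m. 0 < m \<and> coprime m L})\<bar>
         \<le> 10 * (ln Y / Y)"
proof -
  define F where "F = infsum (\<lambda>m. real (totient m) / real m ^ 3) {m. 0 < m \<and> Y \<le> real m \<and> [m = b] (mod L)}"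
  define Z where "Z = infsum (\<lambda>m. 1 / real m ^ 2) {m. 0 < m \<and> coprime m L}"
  have Y_pos: "Y > 0"
    using Y by simp
  have "1 \<le> ln Y"
    using Y exp_le ln_ge_iff[OF Y_pos, of 1] by linarith
  have "Y * F - 1 / (real L * Z) = Y * (F - 1 / (real L * Y * Z))"
    using Y_pos by (simp add: field_simps)
  then have "\<bar>Y * F - 1 / (real L * Z)\<bar> = Y * \<bar>F - 1 / (real L * Y * Z)\<bar>"
    using Y_pos by (simp add: abs_mult)
  also have "\<dots> \<le> Y * ((8 + 2 * ln Y) / Y ^ 2)"
    using totient_cube_progression_tail_error[OF L b, of Y] Y
    by (intro mult_left_mono) (simp_all add: F_def Z_def)
  also have "\<dots> \<le> 10 * (ln Y / Y)"
    using \<open>1 \<le> ln Y\<close> Y_pos by (simp add: power2_eq_square divide_simps)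
  finally show ?thesis
    by (simp add: F_def Z_def)
qed

section \<open>The congruence condition defining \<open>N\<^sub>x\<close>\<close>

lemma padic_abs_nonneg: "padic_abs p a \<ge> 0"
  unfolding padic_abs_def by simp

lemma padic_val_least_nonzero_digit:
  assumes a: "a \<in> qp_space p" and nz: "a \<noteq> padic_zero"
  shows "a (padic_val a) \<noteq> 0" and "\<And>n. n < padic_val a \<Longrightarrow> a n = 0"
proof -
  obtain N where N: "\<And>n. n < N \<Longrightarrow> a n = 0"
    using a by (auto simp: qp_space_def)
  obtain n0 where n0: "a n0 \<noteq> 0"
    using nz by (auto simp: padic_zero_def)
  then have "N \<le> n0"
    using N[of n0] by (meson not_less)
  then have ex: "a (N + int (nat (n0 - N))) \<noteq> 0"
    using n0 by simp
  define k0 where "k0 = (LEAST k::nat. a (N + int k) \<noteq> 0)"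
  have k0: "a (N + int k0) \<noteq> 0"
    unfolding k0_def by (rule LeastI[of "\<lambda>k. a (N + int k) \<noteq> 0", OF ex])
  have below: "a n = 0" if "n < N + int k0" for n
  proof (cases "n < N")
    case False
    then have "n = N + int (nat (n - N))" "nat (n - N) < k0"
      using that by auto
    then show ?thesis
      using not_less_Least[of "nat (n - N)" "\<lambda>k. a (N + int k) \<noteq> 0"] unfolding k0_def by metis
  qed (rule N)
  have "padic_val a = N + int k0"
    unfolding padic_val_def
  proof (rule Least_equality)
    show "\<And>y. a y \<noteq> 0 \<Longrightarrow> N + int k0 \<le> y"
      using below by (meson not_less)
  qed (rule k0)
  then show "a (padic_val a) \<noteq> 0" "\<And>n. n < padic_val a \<Longrightarrow> a n = 0"
    using k0 below by auto
qed

definition digits_nat :: "padic \<Rightarrow> nat \<Rightarrow> int \<Rightarrow> nat \<Rightarrow> nat" where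
  "digits_nat a p v J = (\<Sum>i<J. a (v + int i) * p ^ i)"

lemma digits_nat_cong:
  assumes "j \<le> J"
  shows "[digits_nat a p v J = digits_nat a p v j] (mod p ^ j)"
  using assms
proof (induction J rule: dec_induct)
  case (step J)
  have "[a (v + int J) * p ^ J = 0] (mod p ^ j)"
    using step(1) by (simp add: cong_0_iff le_imp_power_dvd)
  from cong_add[OF step(3) this] show ?case
    by (simp add: digits_nat_def)
qed simp

lemma leading_digits_nat_not_dvd:
  assumes a: "a \<in> qp_space p" "a \<noteq> padic_zero" and k: "k \<ge> 1"
  shows "\<not> p dvd digits_nat a p (padic_val a) k"
proof -
  have "[digits_nat a p (padic_val a) k = digits_nat a p (padic_val a) 1] (mod p ^ 1)"
    using k by (rule digits_nat_cong)
  then have "[digits_nat a p (padic_val a) k = a (padic_val a)] (mod p)"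
    by (simp add: digits_nat_def)
  moreover have "0 < a (padic_val a)" "a (padic_val a) < p"
    using padic_val_least_nonzero_digit(1)[OF a] a(1) by (auto simp: qp_space_def)
  ultimately show ?thesis
    by (metis cong_dvd_iff nat_dvd_not_less)
qed

lemma padic_trunc_eq_digits_nat:
  assumes p: "p > 0" and a: "a \<in> qp_space p" "a \<noteq> padic_zero" and N: "padic_val a \<le> N"
  shows "padic_trunc p N a
           = of_nat p powi padic_val a * of_nat (digits_nat a p (padic_val a) (nat (N - padic_val a)))"
proof -
  define v where "v = padic_val a"
  have "v \<le> n" if "a n \<noteq> 0" for n
    using padic_val_least_nonzero_digit(2)[OF a, of n] that unfolding v_def by (meson not_less)
  then have "padic_trunc p N a = (\<Sum>n\<in>{v..<N}. of_nat (a n) * of_nat p powi n)"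
    unfolding padic_trunc_def by (intro sum.mono_neutral_left) auto
  also have "\<dots> = (\<Sum>i<nat (N - v). of_nat (a (v + int i)) * of_nat p powi (v + int i))"
    by (rule sum.reindex_bij_witness[where j = "\<lambda>n. nat (n - v)" and i = "\<lambda>i. v + int i"]) auto
  also have "\<dots> = (\<Sum>i<nat (N - v). of_nat p powi v * (of_nat (a (v + int i)) * of_nat p ^ i))"
    using p by (intro sum.cong refl) (simp add: power_int_add)
  also have "\<dots> = of_nat p powi v * of_nat (digits_nat a p v (nat (N - v)))"
    by (simp add: digits_nat_def sum_distrib_left)
  finally show ?thesis
    by (simp add: v_def)
qed

lemma in_LZp_of_int_div_iff:
  assumes p: "prime p" and L: "L = p ^ k" and V: "V \<noteq> 0" "\<not> int p dvd V"
  shows "in_LZp p L (of_int A / of_int V) \<longleftrightarrow> int L dvd A"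
proof
  assume "in_LZp p L (of_int A / of_int V)"
  then obtain u w :: int where uw: "w \<noteq> 0" "\<not> int p dvd w" "int L dvd u"
    and eq: "of_int A / of_int V = (of_int u / of_int w :: rat)"
    unfolding in_LZp_def by blast
  have "(of_int (A * w) :: rat) = of_int (u * V)"
    using eq uw(1) V(1) by (simp add: field_simps)
  then have "int L dvd A * w"
    using uw(3) of_int_eq_iff by (metis dvd_mult2)
  moreover have "coprime (int L) w"
    using p uw(2) unfolding L by (simp add: prime_imp_coprime)
  ultimately show "int L dvd A"
    using coprime_dvd_mult_left_iff by blast
qed (use V in \<open>auto simp: in_LZp_def\<close>)

definition rat_padic_unit :: "nat \<Rightarrow> rat \<Rightarrow> bool" where
  "rat_padic_unit p r \<longleftrightarrow>
     (\<exists>U V :: int. V > 0 \<and> \<not> int p dvd U \<and> \<not> int p dvd V \<and> r = of_int U / of_int V)"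

lemma rat_padic_unit_mult:
  assumes p: "prime p" and "rat_padic_unit p r" "rat_padic_unit p r'"
  shows "rat_padic_unit p (r * r')"
proof -
  obtain U V U' V' :: int where "V > 0" "\<not> int p dvd U" "\<not> int p dvd V" "r = of_int U / of_int V"
    "V' > 0" "\<not> int p dvd U'" "\<not> int p dvd V'" "r' = of_int U' / of_int V'"
    using assms(2,3) unfolding rat_padic_unit_def by blast
  with p show ?thesis
    unfolding rat_padic_unit_def
    by (intro exI[of _ "U * U'"] exI[of _ "V * V'"]) (simp add: prime_dvd_mult_iff)
qed

lemma rat_padic_unit_powi_other_prime:
  assumes p: "prime p" and q: "prime q" "q \<noteq> p"
  shows "rat_padic_unit p (of_nat q powi n)"
proof -
  have not_dvd: "\<not> int p dvd int q ^ k" for k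
    using p q by (metis of_nat_dvd_iff of_nat_power prime_dvd_power primes_dvd_imp_eq)
  have q_pos: "int q ^ k > 0" for k
    using q prime_gt_0_nat by simp
  show ?thesis
  proof (cases "n \<ge> 0")
    case True
    then have "(of_nat q :: rat) powi n = of_int (int q ^ nat n) / of_int 1"
      by (simp add: power_int_nonneg_exp)
    with p not_dvd show ?thesis
      unfolding rat_padic_unit_def by (intro exI[of _ "int q ^ nat n"] exI[of _ 1]) auto
  next
    case False
    then have "(of_nat q :: rat) powi n = of_int 1 / of_int (int q ^ nat (- n))"
      using power_int_minus[of "of_nat q :: rat" "- n"] by (simp add: power_int_nonneg_exp divide_inverse)
    with p not_dvd q_pos show ?thesis
      unfolding rat_padic_unit_def by (intro exI[of _ 1] exI[of _ "int q ^ nat (- n)"]) auto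
  qed
qed

lemma rat_padic_unit_prod_other_primes:
  assumes "finite Q" "\<forall>q\<in>Q. prime q" "prime p" "p \<notin> Q"
  shows "rat_padic_unit p (\<Prod>q\<in>Q. of_nat q powi e q)"
  using assms
proof (induction Q rule: finite_induct)
  case empty
  then show ?case
    unfolding rat_padic_unit_def by (intro exI[of _ 1]) (auto simp: prime_gt_1_nat)
next
  case (insert q Q)
  then show ?case
    by (simp add: rat_padic_unit_mult rat_padic_unit_powi_other_prime)
qed

lemma padic_cong_iff_dvd:
  fixes a :: padic and s U V m :: int and c :: rat
  assumes p: "prime p" and L: "L = p ^ k" "k \<ge> 1" and a: "a \<in> qp_space p" "a \<noteq> padic_zero"
    and V: "V \<noteq> 0" "\<not> int p dvd V"
    and c: "c = of_int s * of_nat p powi (- padic_val a) * (of_int U / of_int V)"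
  shows "padic_cong p L a c m \<longleftrightarrow> int L dvd s * U * int (digits_nat a p (padic_val a) k) - m * V"
proof -
  define v where "v = padic_val a"
  define T where "T = int (digits_nat a p v k)"
  have key: "in_LZp p L (c * padic_trunc p (int N) a - of_int m) \<longleftrightarrow> int L dvd s * U * T - m * V"
    if N: "nat (v + int k) \<le> N" for N
  proof -
    define t where "t = int (digits_nat a p v (nat (int N - v)))"
    have vkN: "v + int k \<le> int N"
      using N by (simp add: nat_le_iff)
    then have "padic_trunc p (int N) a = of_nat p powi v * of_int t"
      unfolding t_def v_def using padic_trunc_eq_digits_nat[OF prime_gt_0_nat[OF p] a, of "int N"] by simp
    moreover have "(of_nat p :: rat) powi (- v) * of_nat p powi v = 1"
      using p by (simp add: power_int_minus prime_gt_0_nat)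
    ultimately have trunc_eq: "c * padic_trunc p (int N) a - of_int m = of_int (s * U * t - m * V) / of_int V"
      unfolding c v_def[symmetric] using V by (simp add: field_simps)
    have "in_LZp p L (c * padic_trunc p (int N) a - of_int m) \<longleftrightarrow> int L dvd s * U * t - m * V"
      unfolding trunc_eq by (rule in_LZp_of_int_div_iff[OF p L(1) V])
    moreover have "[t = T] (mod int L)"
    proof -
      have "k \<le> nat (int N - v)"
        using vkN by arith
      then have "[digits_nat a p v (nat (int N - v)) = digits_nat a p v k] (mod p ^ k)"
        by (rule digits_nat_cong)
      then show ?thesis
        unfolding t_def T_def L cong_int_iff .
    qed
    then have "[s * U * t - m * V = s * U * T - m * V] (mod int L)"
      by (intro cong_diff cong_mult cong_refl)
    ultimately show ?thesis
      using cong_dvd_iff by blast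
  qed
  have "padic_cong p L a c m \<longleftrightarrow> (\<forall>\<^sub>F N in sequentially. int L dvd s * U * T - m * V)"
    unfolding padic_cong_def by (rule eventually_subst) (use key in \<open>blast intro: eventually_sequentiallyI\<close>)
  then show ?thesis
    by (simp add: T_def v_def)
qed

lemma padic_cong_unit_class:
  fixes a :: padic and s :: int and r c :: rat
  assumes p: "prime p" and L: "L = p ^ k" "k \<ge> 1" and a: "a \<in> qp_space p" "a \<noteq> padic_zero"
    and s: "s = 1 \<or> s = -1" and r: "rat_padic_unit p r"
    and c: "c = of_int s * of_nat p powi (- padic_val a) * r"
  shows "\<exists>u. coprime u L \<and> (\<forall>m::nat. padic_cong p L a c (int m) \<longleftrightarrow> [m = u] (mod L))"
proof -
  obtain U V :: int where U: "\<not> int p dvd U" and V_pos: "V > 0" and V: "\<not> int p dvd V"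
    and r_UV: "r = of_int U / of_int V"
    using r unfolding rat_padic_unit_def by blast
  have c_UV: "c = of_int s * of_nat p powi (- padic_val a) * (of_int U / of_int V)"
    using c r_UV by simp
  define T where "T = digits_nat a p (padic_val a) k"
  have "\<not> p dvd T"
    unfolding T_def using a L(2) by (rule leading_digits_nat_not_dvd)
  moreover have "\<not> int p dvd s"
    using s prime_gt_1_nat[OF p] by auto
  ultimately have "\<not> int p dvd s * U * int T"
    using p U by (simp add: prime_dvd_mult_iff)
  then have "coprime (s * U * int T) (int p)"
    using prime_imp_coprime[of "int p" "s * U * int T"] p by (simp add: coprime_commute)
  moreover have "coprime V (int p)"
    using prime_imp_coprime[of "int p" V] p V by (simp add: coprime_commute)
  ultimately obtain u where "coprime u L" "\<And>m::nat. int L dvd s * U * int T - int m * V \<longleftrightarrow> [m = u] (mod L)"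
    using cong_class_of_dvd_diff_mult[of L V "s * U * int T"] p L by (auto simp: prime_gt_0_nat)
  then show ?thesis
    using padic_cong_iff_dvd[OF p L a _ V c_UV] V_pos by (auto simp: T_def)
qed

lemma Lp_prime_power: "prime p \<Longrightarrow> \<exists>k\<ge>1. Lp p = p ^ k"
  unfolding Lp_def by (cases "p = 2") (auto intro: exI[of _ 3] exI[of _ 1])

lemma coprime_Lp_iff: "prime p \<Longrightarrow> coprime m (Lp p) \<longleftrightarrow> coprime m p"
  using Lp_prime_power[of p] by auto

lemma coprime_Lp_Lp: "prime p \<Longrightarrow> prime q \<Longrightarrow> p \<noteq> q \<Longrightarrow> coprime (Lp p) (Lp q)"
  using Lp_prime_power[of p] Lp_prime_power[of q] primes_coprime[of p q] by auto

lemma LS_pos: "finite Sf \<Longrightarrow> \<forall>p\<in>Sf. prime p \<Longrightarrow> LS Sf > 0"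
  unfolding LS_def Lp_def using prime_gt_0_nat by (auto intro!: prod_pos)

lemma coprime_LS_iff:
  assumes "finite Sf" "\<forall>p\<in>Sf. prime p"
  shows "coprime m (LS Sf) \<longleftrightarrow> coprime m (\<Prod>Sf)"
  using assms coprime_Lp_iff by (simp add: LS_def coprime_prod_right_iff)

lemma padic_cong_component_unit_class:
  fixes Sf :: "nat set" and x :: QS and c :: rat
  assumes fin: "finite Sf" and primes: "\<forall>q\<in>Sf. prime q" and p: "p \<in> Sf"
    and xs: "\<forall>q\<in>Sf. snd x q \<in> qp_space q \<and> snd x q \<noteq> padic_zero"
    and c: "c = (if fst x < 0 then -1 else 1) * (\<Prod>q\<in>Sf. padic_abs q (snd x q))"
  shows "\<exists>u. coprime u (Lp p) \<and> (\<forall>m::nat. padic_cong p (Lp p) (snd x p) c (int m) \<longleftrightarrow> [m = u] (mod Lp p))"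
proof -
  have p_prime: "prime p"
    using primes p by blast
  obtain k where k: "k \<ge> 1" "Lp p = p ^ k"
    using Lp_prime_power[OF p_prime] by blast
  have a: "snd x p \<in> qp_space p" "snd x p \<noteq> padic_zero"
    using xs p by auto
  have "finite (Sf - {p})" "\<forall>q\<in>Sf - {p}. prime q" "p \<notin> Sf - {p}"
    using fin primes by auto
  then have unit: "rat_padic_unit p (\<Prod>q\<in>Sf - {p}. of_nat q powi (- padic_val (snd x q)))"
    using p_prime by (intro rat_padic_unit_prod_other_primes)
  have "(\<Prod>q\<in>Sf. padic_abs q (snd x q)) = padic_abs p (snd x p) * (\<Prod>q\<in>Sf - {p}. padic_abs q (snd x q))"
    using fin p by (rule prod.remove)
  also have "(\<Prod>q\<in>Sf - {p}. padic_abs q (snd x q)) = (\<Prod>q\<in>Sf - {p}. of_nat q powi (- padic_val (snd x q)))"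
    using xs by (intro prod.cong refl) (simp add: padic_abs_def)
  also have "padic_abs p (snd x p) = of_nat p powi (- padic_val (snd x p))"
    using a(2) by (simp add: padic_abs_def)
  finally have "c = of_int (if fst x < 0 then -1 else 1) * of_nat p powi (- padic_val (snd x p))
                      * (\<Prod>q\<in>Sf - {p}. of_nat q powi (- padic_val (snd x q)))"
    unfolding c by simp
  moreover have "(if fst x < 0 then -1 else 1) = (1::int) \<or> (if fst x < 0 then -1 else 1) = (-1::int)"
    by simp
  ultimately show ?thesis
    using padic_cong_unit_class[OF p_prime k(2,1) a _ unit] by blast
qed

lemma Nx_eq_residue_class:
  fixes Sf :: "nat set" and x :: QS
  assumes fin: "finite Sf" and primes: "\<forall>p\<in>Sf. prime p"
    and xs: "\<forall>p\<in>Sf. snd x p \<in> qp_space p \<and> snd x p \<noteq> padic_zero"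
  obtains b where "coprime b (LS Sf)" and "Nx Sf x = {m. 0 < m \<and> dS Sf x \<le> real m \<and> [m = b] (mod LS Sf)}"
proof -
  define c :: rat where "c = (if fst x < 0 then -1 else 1) * (\<Prod>q\<in>Sf. padic_abs q (snd x q))"
  have "\<forall>p\<in>Sf. \<exists>u. coprime u (Lp p) \<and> (\<forall>m::nat. padic_cong p (Lp p) (snd x p) c (int m) \<longleftrightarrow> [m = u] (mod Lp p))"
  proof
    fix p assume "p \<in> Sf"
    then show "\<exists>u. coprime u (Lp p) \<and> (\<forall>m::nat. padic_cong p (Lp p) (snd x p) c (int m) \<longleftrightarrow> [m = u] (mod Lp p))"
      by (rule padic_cong_component_unit_class[OF fin primes _ xs c_def])
  qed
  then obtain u where u: "\<forall>p\<in>Sf. coprime (u p) (Lp p) \<and>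
      (\<forall>m::nat. padic_cong p (Lp p) (snd x p) c (int m) \<longleftrightarrow> [m = u p] (mod Lp p))"
    by (rule exE[OF bchoice])
  have "\<forall>i\<in>Sf. \<forall>j\<in>Sf. i \<noteq> j \<longrightarrow> coprime (Lp i) (Lp j)"
    using primes coprime_Lp_Lp by blast
  moreover have "\<forall>p\<in>Sf. coprime (u p) (Lp p)"
    using u by blast
  ultimately obtain b where b: "coprime b (LS Sf)"
    and cong_b: "\<And>m. (\<forall>p\<in>Sf. [m = u p] (mod Lp p)) \<longleftrightarrow> [m = b] (mod LS Sf)"
    unfolding LS_def by (rule chinese_remainder_unit_classes[OF fin]) blast
  have "m \<in> Nx Sf x \<longleftrightarrow> 0 < m \<and> dS Sf x \<le> real m \<and> [m = b] (mod LS Sf)" for m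
  proof -
    have cong: "(\<forall>p\<in>Sf. padic_cong p (Lp p) (snd x p) c (int m)) \<longleftrightarrow> [m = b] (mod LS Sf)"
      using u cong_b by simp
    have "[m = b] (mod LS Sf) \<Longrightarrow> coprime m (\<Prod>Sf)"
      using coprime_cong_cong_left[of m b "LS Sf"] b coprime_LS_iff[OF fin primes] by simp
    then show ?thesis
      unfolding Nx_def NS_def c_def[symmetric] mem_Collect_eq cong by auto
  qed
  with b that show ?thesis
    by blast
qed

section \<open>The function \<open>\<Phi>\<^sub>S\<close>\<close>

lemma QS_space_component:
  assumes "x \<in> space (QS_measure Sf)" "p \<in> Sf"
  shows "snd x p \<in> qp_space p"
proof -
  have "snd x \<in> space (PiM Sf padic_measure)"
    using assms(1) by (auto simp: QS_measure_def space_pair_measure)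
  then have "snd x p \<in> space (padic_measure p)"
    using assms(2) by (auto simp: space_PiM)
  then show ?thesis
    by (simp add: padic_measure_def qp_measurable_space_def space_restrict_space)
qed

lemma dS_nonneg: "dS Sf x \<ge> 0"
  unfolding dS_def by (intro mult_nonneg_nonneg prod_nonneg) (auto simp: padic_abs_nonneg)

lemma dS_pos_imp_components_nonzero:
  assumes "finite Sf" "dS Sf x > 0"
  shows "fst x \<noteq> 0" and "\<forall>p\<in>Sf. snd x p \<noteq> padic_zero"
proof -
  show "fst x \<noteq> 0"
    using assms(2) by (auto simp: dS_def)
  show "\<forall>p\<in>Sf. snd x p \<noteq> padic_zero"
  proof (intro ballI notI)
    fix p assume "p \<in> Sf" "snd x p = padic_zero"
    then have "(\<Prod>p\<in>Sf. real_of_rat (padic_abs p (snd x p))) = 0"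
      using assms(1) by (simp add: padic_abs_def prod_zero_iff) blast
    then show False
      using assms(2) by (simp add: dS_def)
  qed
qed

lemma suminf_restrict_eq_infsum:
  fixes f :: "nat \<Rightarrow> real"
  assumes f: "\<And>m. 0 \<le> f m" "\<And>m. f m \<le> 1 / real m ^ 2"
  shows "(\<Sum>m. if m \<in> S then f m else 0) = infsum f S"
proof -
  define g where "g = (\<lambda>m. if m \<in> S then f m else 0)"
  have "summable g"
    using f by (intro summable_comparison_test'[OF summable_inverse_square, of 0]) (auto simp: g_def)
  then have "(g has_sum suminf g) UNIV"
    using f by (intro sums_nonneg_imp_has_sum summable_sums) (auto simp: g_def)
  then have "suminf g = infsum g UNIV"
    by (simp add: infsumI)
  also have "\<dots> = infsum f S"
    by (rule infsum_cong_neutral) (auto simp: g_def)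
  finally show ?thesis
    by (simp add: g_def)
qed

lemma totient_div_cube_bounds:
  "0 \<le> real (totient m) / real m ^ 3" "real (totient m) / real m ^ 3 \<le> 1 / real m ^ 2"
proof -
  show "0 \<le> real (totient m) / real m ^ 3"
    by simp
  have "real (totient m) / real m ^ 3 \<le> real m / real m ^ 3"
    by (intro divide_right_mono) (auto simp: totient_le)
  then show "real (totient m) / real m ^ 3 \<le> 1 / real m ^ 2"
    by (cases "m = 0") (simp_all add: power2_eq_square power3_eq_cube)
qed

lemma PhiS_eq_infsum:
  assumes "fst x \<noteq> 0" "\<forall>p\<in>Sf. snd x p \<noteq> padic_zero"
  shows "PhiS Sf x = dS Sf x * infsum (\<lambda>m. real (totient m) / real m ^ 3) (Nx Sf x)"
  using assms suminf_restrict_eq_infsum[OF totient_div_cube_bounds] by (simp add: PhiS_def)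

lemma abs_PhiS_le: "\<bar>PhiS Sf x\<bar> \<le> dS Sf x * infsum (\<lambda>m. 1 / real m ^ 2) UNIV"
proof (cases "fst x = 0 \<or> (\<exists>p\<in>Sf. snd x p = padic_zero)")
  case True
  then show ?thesis
    using dS_nonneg[of Sf x] by (simp add: PhiS_def infsum_nonneg)
next
  case False
  have "0 \<le> infsum (\<lambda>m. real (totient m) / real m ^ 3) (Nx Sf x)"
    by (simp add: infsum_nonneg)
  moreover have "infsum (\<lambda>m. real (totient m) / real m ^ 3) (Nx Sf x) \<le> infsum (\<lambda>m. 1 / real m ^ 2) UNIV"
    using totient_div_cube_bounds
    by (intro infsum_mono_neutral summable_on_dominated[OF inverse_square_summable_on]) auto
  ultimately show ?thesis
    using False dS_nonneg[of Sf x] by (simp add: PhiS_eq_infsum abs_mult mult_left_mono)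
qed

lemma zetaS2_eq_infsum:
  assumes "finite Sf" "\<forall>p\<in>Sf. prime p"
  shows "zetaS2 Sf = infsum (\<lambda>m. 1 / real m ^ 2) {m. 0 < m \<and> coprime m (LS Sf)}"
proof -
  have "NS Sf = {m. 0 < m \<and> coprime m (LS Sf)}"
    using coprime_LS_iff[OF assms] by (auto simp: NS_def)
  then show ?thesis
    unfolding zetaS2_def by (subst suminf_restrict_eq_infsum) auto
qed

lemma PhiS_asymptotic:
  assumes fin: "finite Sf" and primes: "\<forall>p\<in>Sf. prime p"
    and x: "x \<in> space (QS_measure Sf)" and d: "dS Sf x \<ge> 3"
  shows "\<bar>PhiS Sf x - 1 / (real (LS Sf) * zetaS2 Sf)\<bar> \<le> 10 * (ln (dS Sf x) / dS Sf x)"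
proof -
  have "dS Sf x > 0"
    using d by simp
  note nonzero = dS_pos_imp_components_nonzero[OF fin this]
  have "\<forall>p\<in>Sf. snd x p \<in> qp_space p \<and> snd x p \<noteq> padic_zero"
    using QS_space_component[OF x] nonzero(2) by blast
  then obtain b where b: "coprime b (LS Sf)"
    and Nx: "Nx Sf x = {m. 0 < m \<and> dS Sf x \<le> real m \<and> [m = b] (mod LS Sf)}"
    by (rule Nx_eq_residue_class[OF fin primes])
  have "LS Sf \<ge> 1"
    using LS_pos[OF fin primes] by simp
  from totient_cube_progression_tail[OF this b d] show ?thesis
    using nonzero d by (simp add: PhiS_eq_infsum Nx zetaS2_eq_infsum[OF fin primes])
qed

theorem corollary4p2:
  fixes Sf :: "nat set"
  assumes "finite Sf" and "\<forall>p\<in>Sf. prime p"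
  shows "\<exists>r0>0.
     (\<exists>B. \<forall>x\<in>space (QS_measure Sf). dS Sf x \<le> r0 \<longrightarrow> \<bar>PhiS Sf x\<bar> \<le> B) \<and>
     (\<exists>C. AE x in QS_measure Sf. dS Sf x > r0 \<longrightarrow>
        \<bar>PhiS Sf x - 1 / (real (LS Sf) * zetaS2 Sf)\<bar> \<le> C * (ln (dS Sf x) / dS Sf x))"
proof (rule exI[of _ "3::real"], intro conjI)
  show "(3::real) > 0"
    by simp
  define Z where "Z = infsum (\<lambda>m::nat. 1 / real m ^ 2) UNIV"
  have "0 \<le> Z"
    unfolding Z_def by (simp add: infsum_nonneg)
  then have "\<bar>PhiS Sf x\<bar> \<le> 3 * Z" if "dS Sf x \<le> 3" for x
    using abs_PhiS_le[of Sf x, folded Z_def] mult_right_mono[OF that \<open>0 \<le> Z\<close>] by linarith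
  then show "\<exists>B. \<forall>x\<in>space (QS_measure Sf). dS Sf x \<le> 3 \<longrightarrow> \<bar>PhiS Sf x\<bar> \<le> B"
    by blast
  show "\<exists>C. AE x in QS_measure Sf. dS Sf x > 3 \<longrightarrow>
          \<bar>PhiS Sf x - 1 / (real (LS Sf) * zetaS2 Sf)\<bar> \<le> C * (ln (dS Sf x) / dS Sf x)"
    using PhiS_asymptotic[OF assms] by (intro exI[of _ 10] AE_I2) auto
qed

end
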